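(* Let $\lambda$ be a positive, increasing, smooth function on $[0,\infty)$ such that $\liminf_{x\to\infty}S(x,\lambda)>0$. Let $g$ be a positive differentiable function on $(0,\infty)$ such that $X\mapsto\log g(e^X)$ is convex and \[ \int_0^\infty g(x)\,\lambda(x)^{-1}\,dx<\infty . \] Then $\lim_{x\to\infty}g(x)\lambda(x)^{-1}=0$.
   Context: For a positive increasing smooth function $\lambda$ and $x_0>0$ in its domain, \[ S(x_0,\lambda)=\int_{x_0}^\infty\frac{\lambda(x_0)}{\lambda(x)}\left(\frac{x}{x_0}\right)^{x_0\lambda'(x_0)/\lambda(x_0)}dx . \] *)

theory Defs
  imports "HOL-Analysis.Analysis"
begin

definition smooth_on_nonneg :: "(real \<Rightarrow> real) \<Rightarrow> bool" where
  "smooth_on_nonneg f \<longleftrightarrow>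
     (\<exists>D :: nat \<Rightarrow> real \<Rightarrow> real. D 0 = f \<and>
        (\<forall>n. \<forall>x\<ge>0. (D n has_real_derivative D (Suc n) x) (at x within {0..})))"

definition S_int :: "real \<Rightarrow> (real \<Rightarrow> real) \<Rightarrow> ennreal" where
  "S_int x0 lam =
     (\<integral>\<^sup>+ x \<in> {x0..}. ennreal ((lam x0 / lam x) *
         (x / x0) powr (x0 * deriv lam x0 / lam x0)) \<partial>lborel)"

end

theory Submission
  imports Defs
begin

text \<open>Put \<open>F = g / \<lambda>\<close>. Convexity of \<open>X \<mapsto> log g(e\<^sup>X)\<close> gives the tangent bound
  \<open>g(x) \<ge> g(z) (x/z)\<^bsup>z g'(z)/g(z)\<^esup>\<close>, so at any point \<open>z\<close> with \<open>F'(z) \<ge> 0\<close>, i.e. where the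
  elasticity of \<open>g\<close> dominates that of \<open>\<lambda>\<close>, we get \<open>F(z) S(z,\<lambda>) \<le> \<integral>\<^sub>z\<^sup>\<infinity> F\<close>. As \<open>S\<close> stays
  above some \<open>c > 0\<close>, \<open>F\<close> is small at such points far out. For large \<open>x\<close>, either \<open>F(u) < F(x)\<close> for
  some \<open>u \<in> [M, x]\<close>, and then a maximum point of \<open>F\<close> on \<open>[u, x]\<close> is such a point with value at
  least \<open>F(x)\<close>; or \<open>F(x)\<close> is the minimum of \<open>F\<close> on \<open>[M, x]\<close>, and then
  \<open>F(x) (x - M) \<le> \<integral> F\<close>.\<close>

text \<open>The exponent in \<open>S(x\<^sub>0, \<lambda>)\<close> is \<open>elasticity \<lambda> x\<^sub>0\<close>.\<close>
definition elasticity :: "(real \<Rightarrow> real) \<Rightarrow> real \<Rightarrow> real" where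
  "elasticity f x = x * deriv f x / f x"

lemma borel_measurable_ennreal_continuous_on_indicator:
  fixes f :: "real \<Rightarrow> real"
  assumes "S \<in> sets borel" "continuous_on S f"
  shows "(\<lambda>x. ennreal (f x) * indicator S x) \<in> borel_measurable lborel"
proof -
  have "(\<lambda>x. indicator S x *\<^sub>R f x) \<in> borel_measurable borel"
    using borel_measurable_continuous_on_indicator[OF assms] .
  hence "(\<lambda>x. ennreal (indicator S x *\<^sub>R f x)) \<in> borel_measurable borel"
    by measurable
  moreover have "(\<lambda>x. ennreal (indicator S x *\<^sub>R f x)) = (\<lambda>x. ennreal (f x) * indicator S x)"
    by (auto simp: indicator_def fun_eq_iff)
  ultimately show ?thesis by simp
qed

lemma eventually_nn_integral_tail_less:
  fixes F :: "real \<Rightarrow> real"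
  assumes cont: "continuous_on {a<..} F"
    and fin: "(\<integral>\<^sup>+ x \<in> {a<..}. ennreal (F x) \<partial>lborel) < \<infinity>"
    and "\<eta> > 0"
  shows "eventually (\<lambda>z. (\<integral>\<^sup>+ x \<in> {z..}. ennreal (F x) \<partial>lborel) < \<eta>) at_top"
proof -
  define f where "f i x = ennreal (F x) * indicator {a + real i + 1..} x" for i :: nat and x
  have meas: "f i \<in> borel_measurable lborel" for i
    unfolding f_def
    by (intro borel_measurable_ennreal_continuous_on_indicator continuous_on_subset[OF cont]) auto
  have "decseq f"
    by (auto simp: decseq_def monotone_def monotone_on_def le_fun_def f_def indicator_def)
  moreover have "(\<integral>\<^sup>+ x. f 0 x \<partial>lborel) < \<infinity>"
    unfolding f_def
    by (rule le_less_trans[OF _ fin], rule nn_integral_mono) (auto simp: indicator_def)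
  ultimately have "(\<integral>\<^sup>+ x. (INF i. f i x) \<partial>lborel) = (INF i. integral\<^sup>N lborel (f i))"
    using meas by (intro nn_integral_monotone_convergence_INF_decseq) auto
  moreover have "(INF i. f i x) = 0" for x
  proof -
    have "f (nat \<lceil>x - a\<rceil>) x = 0"
      unfolding f_def indicator_def by auto linarith
    thus ?thesis by (metis INF_lower UNIV_I le_zero_eq)
  qed
  ultimately have "(INF i. integral\<^sup>N lborel (f i)) < \<eta>" using \<open>\<eta> > 0\<close> by simp
  then obtain i where i: "integral\<^sup>N lborel (f i) < \<eta>" by (auto simp: INF_less_iff)
  show ?thesis
    unfolding eventually_at_top_linorder
  proof (intro exI allI impI)
    fix z assume "z \<ge> a + real i + 1"
    hence "(\<integral>\<^sup>+ x \<in> {z..}. ennreal (F x) \<partial>lborel) \<le> integral\<^sup>N lborel (f i)"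
      unfolding f_def by (intro nn_integral_mono) (auto simp: indicator_def)
    thus "(\<integral>\<^sup>+ x \<in> {z..}. ennreal (F x) \<partial>lborel) < \<eta>" using i by simp
  qed
qed

text \<open>A maximum point of \<open>F\<close> on \<open>[u, b]\<close>; it is not \<open>u\<close>, and \<open>F\<close> cannot be decreasing there.\<close>
lemma exists_deriv_nonneg_ge_endpoint:
  fixes F F' :: "real \<Rightarrow> real"
  assumes "u < b" "F u < F b" "continuous_on {u..b} F"
    and der: "\<And>z. z \<in> {u<..b} \<Longrightarrow> (F has_real_derivative F' z) (at z)"
  shows "\<exists>z\<in>{u<..b}. F b \<le> F z \<and> F' z \<ge> 0"
proof -
  obtain z where z: "z \<in> {u..b}" and zmax: "\<forall>y\<in>{u..b}. F y \<le> F z"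
    using continuous_attains_sup[of "{u..b}" F] assms by auto
  have "F b \<le> F z" using zmax assms by simp
  hence zu: "z \<in> {u<..b}" using z assms by (cases "z = u") auto
  have "F' z \<ge> 0"
  proof (rule ccontr)
    assume "\<not> F' z \<ge> 0"
    then obtain d where d: "d > 0" "\<And>h. h > 0 \<Longrightarrow> h < d \<Longrightarrow> F z < F (z - h)"
      using DERIV_neg_dec_left[OF der[OF zu]] by force
    define h where "h = min (d/2) ((z - u)/2)"
    have "F z < F (z - h)" using d zu by (intro d(2)) (auto simp: h_def)
    moreover have "z - h \<in> {u..b}" using zu d by (auto simp: h_def min_def field_simps)
    ultimately show False using zmax by (meson not_le)
  qed
  thus ?thesis using zu \<open>F b \<le> F z\<close> by blast
qed

lemma smooth_on_nonneg_imp_derivative_within: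
  assumes "smooth_on_nonneg f"
  obtains f' where "\<And>x. x \<ge> 0 \<Longrightarrow> (f has_real_derivative f' x) (at x within {0..})"
proof -
  obtain D where "D 0 = f" "\<forall>n. \<forall>x\<ge>0. (D n has_real_derivative D (Suc n) x) (at x within {0..})"
    using assms unfolding smooth_on_nonneg_def by blast
  thus ?thesis using that[of "D 1"] by (metis One_nat_def)
qed

lemma smooth_on_nonneg_imp_DERIV:
  assumes "smooth_on_nonneg f" "x > 0"
  shows "(f has_real_derivative deriv f x) (at x)"
proof -
  obtain f' where "(f has_real_derivative f' x) (at x within {0..})"
    using smooth_on_nonneg_imp_derivative_within[OF assms(1)] assms(2) by (metis less_imp_le)
  hence "(f has_real_derivative f' x) (at x within {0<..})"
    by (rule has_field_derivative_subset) auto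
  hence "(f has_real_derivative f' x) (at x)"
    using assms(2) at_within_open[of x "{0<..}"] by simp
  thus ?thesis using DERIV_imp_deriv by metis
qed

lemma smooth_on_nonneg_imp_continuous_on:
  assumes "smooth_on_nonneg f"
  shows "continuous_on {0..} f"
  using smooth_on_nonneg_imp_derivative_within[OF assms] DERIV_continuous_on
  by (metis atLeast_iff)

lemma elasticity_le_iff:
  assumes "x > 0" "f x > 0" "g x > 0"
  shows "elasticity f x \<le> elasticity g x \<longleftrightarrow> g x * deriv f x \<le> deriv g x * f x"
  using assms by (simp add: elasticity_def field_simps)

lemma log_convex_tangent_powr:
  fixes g :: "real \<Rightarrow> real"
  assumes conv: "convex_on UNIV (\<lambda>X. ln (g (exp X)))"
    and "z > 0" "x > 0" "g z > 0" "g x > 0"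
    and der: "(g has_real_derivative deriv g z) (at z)"
  shows "g z * (x / z) powr elasticity g z \<le> g x"
proof -
  have "((\<lambda>X. g (exp X)) has_real_derivative deriv g z * z) (at (ln z))"
    using DERIV_chain2[of g "deriv g z" exp "ln z"] der DERIV_exp[of "ln z"] \<open>z > 0\<close> by simp
  hence "((\<lambda>X. ln (g (exp X))) has_real_derivative elasticity g z) (at (ln z))"
    using DERIV_chain2[of ln "inverse (g z)"] DERIV_ln[of "g z"] \<open>g z > 0\<close> \<open>z > 0\<close>
    by (force simp: elasticity_def field_simps)
  hence "elasticity g z * (ln x - ln z) \<le> ln (g (exp (ln x))) - ln (g (exp (ln z)))"
    by (intro convex_on_imp_above_tangent[OF conv]) auto
  hence "ln (g z) + elasticity g z * ln (x / z) \<le> ln (g x)"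
    using assms by (simp add: ln_div)
  hence "exp (ln (g z) + elasticity g z * ln (x / z)) \<le> g x"
    using \<open>g x > 0\<close> by (metis exp_le_cancel_iff exp_ln)
  thus ?thesis using assms by (simp add: exp_add powr_def mult.commute)
qed

lemma S_int_mult_le_nn_integral:
  fixes lam g :: "real \<Rightarrow> real"
  assumes "z > 0"
    and lam_pos: "\<And>x. x \<ge> z \<Longrightarrow> lam x > 0" and lam_cont: "continuous_on {z..} lam"
    and g_pos: "\<And>x. x \<ge> z \<Longrightarrow> g x > 0"
    and conv: "convex_on UNIV (\<lambda>X. ln (g (exp X)))"
    and g_der: "(g has_real_derivative deriv g z) (at z)"
    and el: "elasticity lam z \<le> elasticity g z"
  shows "ennreal (g z / lam z) * S_int z lam \<le> (\<integral>\<^sup>+ x \<in> {z..}. ennreal (g x / lam x) \<partial>lborel)"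
proof -
  define h where "h x = lam z / lam x * (x / z) powr elasticity lam z" for x
  have "continuous_on {z..} h"
    unfolding h_def using lam_cont lam_pos \<open>z > 0\<close>
    by (intro continuous_intros) (auto simp: less_imp_neq[symmetric])
  hence meas: "(\<lambda>x. ennreal (h x) * indicator {z..} x) \<in> borel_measurable lborel"
    by (intro borel_measurable_ennreal_continuous_on_indicator) auto
  have pointwise: "ennreal (g z / lam z) * ennreal (h x) \<le> ennreal (g x / lam x)" if "x \<ge> z" for x
  proof -
    have "g z * (x / z) powr elasticity lam z \<le> g z * (x / z) powr elasticity g z"
      using el that \<open>z > 0\<close> g_pos[of z] by (intro mult_left_mono powr_mono) auto
    also have "\<dots> \<le> g x"
      using that \<open>z > 0\<close> g_pos by (intro log_convex_tangent_powr[OF conv _ _ _ _ g_der]) auto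
    finally have "g z / lam z * h x \<le> g x / lam x"
      unfolding h_def using lam_pos[of x] lam_pos[of z] that by (simp add: field_simps)
    thus ?thesis
      using lam_pos[of z] g_pos[of z] \<open>z > 0\<close>
      by (subst ennreal_mult'[symmetric]) (auto intro: ennreal_leI)
  qed
  have "ennreal (g z / lam z) * S_int z lam
      = (\<integral>\<^sup>+ x. ennreal (g z / lam z) * (ennreal (h x) * indicator {z..} x) \<partial>lborel)"
    using nn_integral_cmult[OF meas] by (simp add: S_int_def h_def elasticity_def)
  also have "\<dots> \<le> (\<integral>\<^sup>+ x \<in> {z..}. ennreal (g x / lam x) \<partial>lborel)"
    using pointwise by (intro nn_integral_mono) (auto simp: indicator_def)
  finally show ?thesis .
qed

lemma min_mult_length_le_nn_integral:
  fixes F :: "real \<Rightarrow> real"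
  assumes "a < M" "M \<le> x" "F x \<ge> 0" "\<And>u. u \<in> {M..x} \<Longrightarrow> F x \<le> F u"
  shows "ennreal (F x * (x - M)) \<le> (\<integral>\<^sup>+ y \<in> {a<..}. ennreal (F y) \<partial>lborel)"
proof -
  have "ennreal (F x * (x - M)) = (\<integral>\<^sup>+ y. ennreal (F x) * indicator {M..x} y \<partial>lborel)"
    using assms by (simp add: ennreal_mult' nn_integral_cmult_indicator)
  also have "\<dots> \<le> (\<integral>\<^sup>+ y \<in> {a<..}. ennreal (F y) \<partial>lborel)"
    using assms by (intro nn_integral_mono) (auto simp: indicator_def intro!: ennreal_leI)
  finally show ?thesis .
qed

lemma tendsto_zero_if_tail_bounds_rising_points:
  fixes F F' :: "real \<Rightarrow> real" and c :: real
  assumes F_nonneg: "\<And>x. x > a \<Longrightarrow> F x \<ge> 0"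
    and F_der: "\<And>x. x > a \<Longrightarrow> (F has_real_derivative F' x) (at x)"
    and F_int: "(\<integral>\<^sup>+ x \<in> {a<..}. ennreal (F x) \<partial>lborel) < \<infinity>"
    and "c > 0"
    and rising: "eventually (\<lambda>z. F' z \<ge> 0 \<longrightarrow>
                   ennreal (c * F z) \<le> (\<integral>\<^sup>+ x \<in> {z..}. ennreal (F x) \<partial>lborel)) at_top"
  shows "(F \<longlongrightarrow> 0) at_top"
proof (rule order_tendstoI)
  show "eventually (\<lambda>x. y < F x) at_top" if "y < 0" for y
    using eventually_gt_at_top[of a] by eventually_elim (use that F_nonneg in force)
next
  fix \<epsilon> :: real assume "\<epsilon> > 0"
  have F_cont: "continuous_on {a<..} F"
    by (rule DERIV_continuous_on[of _ _ F']) (use F_der has_field_derivative_at_within in blast)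
  define I where "I = enn2real (\<integral>\<^sup>+ x \<in> {a<..}. ennreal (F x) \<partial>lborel)"
  have I: "(\<integral>\<^sup>+ x \<in> {a<..}. ennreal (F x) \<partial>lborel) = ennreal I" "I \<ge> 0"
    unfolding I_def using F_int by (auto simp: less_top[symmetric])
  have "eventually (\<lambda>z. (\<integral>\<^sup>+ x \<in> {z..}. ennreal (F x) \<partial>lborel) < ennreal (c * \<epsilon>)) at_top"
    using \<open>c > 0\<close> \<open>\<epsilon> > 0\<close> by (intro eventually_nn_integral_tail_less[OF F_cont F_int]) simp
  with rising eventually_gt_at_top[of a]
  have "eventually (\<lambda>z. z > a \<and> (F' z \<ge> 0 \<longrightarrow> F z < \<epsilon>)) at_top"
  proof eventually_elim
    case (elim z)
    have "F' z \<ge> 0 \<Longrightarrow> ennreal (c * F z) < ennreal (c * \<epsilon>)"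
      using elim by (auto intro: le_less_trans)
    hence "F' z \<ge> 0 \<Longrightarrow> c * F z < c * \<epsilon>"
      using elim F_nonneg[of z] \<open>c > 0\<close> by (simp add: ennreal_less_iff)
    thus ?case using elim \<open>c > 0\<close> by simp
  qed
  then obtain M where M: "\<And>z. z \<ge> M \<Longrightarrow> z > a \<and> (F' z \<ge> 0 \<longrightarrow> F z < \<epsilon>)"
    unfolding eventually_at_top_linorder by blast
  have "M > a" using M by blast
  show "eventually (\<lambda>x. F x < \<epsilon>) at_top"
    unfolding eventually_at_top_linorder
  proof (intro exI allI impI)
    fix x assume x: "x \<ge> M + I / \<epsilon> + 1"
    moreover have "I / \<epsilon> \<ge> 0" using I(2) \<open>\<epsilon> > 0\<close> by simp
    ultimately have "M < x" by linarith
    show "F x < \<epsilon>"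
    proof (cases "\<exists>u\<in>{M..x}. F u < F x")
      case True
      then obtain u where u: "u \<in> {M..<x}" "F u < F x"
        by (metis atLeastAtMost_iff atLeastLessThan_iff order_less_irrefl order_le_less)
      have "continuous_on {u..x} F" using u \<open>M > a\<close> by (intro continuous_on_subset[OF F_cont]) auto
      then obtain z where z: "z \<in> {u<..x}" "F x \<le> F z" "F' z \<ge> 0"
        using exists_deriv_nonneg_ge_endpoint[of u x F F'] u F_der \<open>M > a\<close> by force
      thus ?thesis using M[of z] u by fastforce
    next
      case False
      have "ennreal (F x * (x - M)) \<le> ennreal I"
        unfolding I(1)[symmetric] using False \<open>M < x\<close> \<open>M > a\<close> F_nonneg[of x]
        by (intro min_mult_length_le_nn_integral) (auto simp: not_less)
      hence "F x * (x - M) \<le> I" using I(2) by simp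
      moreover have "I / \<epsilon> < x - M" using x by linarith
      hence "I < \<epsilon> * (x - M)" using \<open>\<epsilon> > 0\<close> by (simp add: divide_less_eq mult.commute)
      ultimately have "F x * (x - M) < \<epsilon> * (x - M)" by linarith
      thus ?thesis using \<open>M < x\<close> by simp
    qed
  qed
qed

lemma Liminf_pos_imp_eventually_greater_ennreal:
  fixes f :: "'a \<Rightarrow> ennreal"
  assumes "Liminf F f > 0"
  obtains c :: real where "c > 0" "eventually (\<lambda>x. ennreal c < f x) F"
proof -
  obtain c' where c': "0 < c'" "c' < Liminf F f"
    using dense[OF assms] by blast
  hence "c' < \<infinity>" using top.not_eq_extremum by force
  show ?thesis
    using that[of "enn2real c'"] c' \<open>c' < \<infinity>\<close> less_LiminfD[OF c'(2)]
    by (auto simp: enn2real_positive_iff less_top)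
qed

theorem theorem4p2:
  fixes lam g :: "real \<Rightarrow> real"
  assumes lam_pos: "\<forall>x\<ge>0. lam x > 0"
    and lam_incr: "mono_on {0..} lam"
    and lam_smooth: "smooth_on_nonneg lam"
    and S_liminf: "Liminf at_top (\<lambda>x. S_int x lam) > 0"
    and g_pos: "\<forall>x>0. g x > 0"
    and g_diff: "\<forall>x>0. g differentiable (at x)"
    and g_logconvex: "convex_on UNIV (\<lambda>X. ln (g (exp X)))"
    and int_fin: "(\<integral>\<^sup>+ x \<in> {0<..}. ennreal (g x / lam x) \<partial>lborel) < \<infinity>"
  shows "((\<lambda>x. g x / lam x) \<longlongrightarrow> 0) at_top"
proof -
  define F' where "F' x = (deriv g x * lam x - g x * deriv lam x) / (lam x * lam x)" for x
  have lam_der: "(lam has_real_derivative deriv lam x) (at x)" if "x > 0" for x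
    using smooth_on_nonneg_imp_DERIV[OF lam_smooth that] .
  have g_der: "(g has_real_derivative deriv g x) (at x)" if "x > 0" for x
    using g_diff that DERIV_deriv_iff_real_differentiable by blast
  have lam_x: "lam x > 0" and g_x: "g x > 0" if "x > 0" for x
    using lam_pos g_pos that by auto
  have F_der: "((\<lambda>x. g x / lam x) has_real_derivative F' x) (at x)" if "x > 0" for x
    unfolding F'_def using lam_x[OF that] by (intro DERIV_divide g_der lam_der that) auto
  obtain c where "c > 0" and S_gt_c: "eventually (\<lambda>z. ennreal c < S_int z lam) at_top"
    using Liminf_pos_imp_eventually_greater_ennreal[OF S_liminf] by blast
  have "eventually (\<lambda>z. F' z \<ge> 0 \<longrightarrow> ennreal (c * (g z / lam z))
          \<le> (\<integral>\<^sup>+ x \<in> {z..}. ennreal (g x / lam x) \<partial>lborel)) at_top"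
    using S_gt_c eventually_gt_at_top[of 0]
  proof eventually_elim
    case (elim z)
    show ?case
    proof
      assume "F' z \<ge> 0"
      hence "elasticity lam z \<le> elasticity g z"
        using elim lam_x g_x by (subst elasticity_le_iff) (auto simp: F'_def divide_simps)
      have "ennreal (c * (g z / lam z)) = ennreal (g z / lam z) * ennreal c"
        using \<open>c > 0\<close> by (subst ennreal_mult') (auto simp: mult.commute)
      also have "\<dots> \<le> ennreal (g z / lam z) * S_int z lam"
        using elim by (intro mult_left_mono) auto
      also have "\<dots> \<le> (\<integral>\<^sup>+ x \<in> {z..}. ennreal (g x / lam x) \<partial>lborel)"
        using elim lam_x g_x \<open>elasticity lam z \<le> elasticity g z\<close>
        by (intro S_int_mult_le_nn_integral[OF _ _ _ _ g_logconvex g_der] continuous_on_subset[OF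
              smooth_on_nonneg_imp_continuous_on[OF lam_smooth]]) auto
      finally show "ennreal (c * (g z / lam z)) \<le> (\<integral>\<^sup>+ x \<in> {z..}. ennreal (g x / lam x) \<partial>lborel)" .
    qed
  qed
  thus ?thesis
    using lam_x g_x F_der int_fin \<open>c > 0\<close>
    by (intro tendsto_zero_if_tail_bounds_rising_points[where a = 0 and F' = F'])
       (auto intro: divide_nonneg_pos less_imp_le)
qed

end
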